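(* Let $\gamma\in\mathbb{R}$, $\lambda>0$, $\Delta>0$, let $\nu$ be a finite measure on $\mathbb{R}$ with $\nu(\mathbb{R})=\lambda$, $F:=\nu/\lambda$, and let $P$ and $\mathcal{F}^{-1}[\varphi^{-1}(-\cdot)]$ be as in the context. Let $f_1,f_2$ be bounded functions. Then $$\int_{\mathbb{R}}\big(f_1*\mathcal{F}^{-1}[\varphi^{-1}(-\cdot)](x)\big)\big(f_2*\mathcal{F}^{-1}[\varphi^{-1}(-\cdot)](x)\big)P(dx)$$ $$=f_1(0)f_2(0)+\Delta\Big(\int_{\mathbb{R}}f_1f_2\,d\nu-f_1(0)\,(f_2*\bar\nu)(0)-f_2(0)\,(f_1*\bar\nu)(0)+\lambda f_1(0)f_2(0)\Big)+O((\lambda\Delta)^2).$$ In particular, if $f_1(0)=f_2(0)=0$, the left-hand side equals $\lambda\Delta\int_{\mathbb{R}}f_1(x)f_2(x)F(dx)+O((\lambda\Delta)^2)$.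
   Context: $\bar\nu(A):=\nu(-A)$ for Borel $A$, $\nu^{*k}$ and $\bar\nu^{*k}$ are $k$-fold convolutions with $\nu^{*0}=\bar\nu^{*0}=\delta_0$. $P:=e^{-\lambda\Delta}\delta_{\gamma\Delta}*\sum_{k\ge0}\nu^{*k}\Delta^k/k!$ (the law of $X_\Delta$ for the compound Poisson process with drift $\gamma$, intensity $\lambda$ and jump law $F$), $\varphi=\mathcal{F}P$ with $\mathcal{F}\mu(u)=\int e^{iux}\mu(dx)$, i.e. $\varphi(u)=\exp(\Delta(i\gamma u+\mathcal{F}\nu(u)-\lambda))$, and $\mathcal{F}^{-1}[\varphi^{-1}(-\cdot)]:=e^{\lambda\Delta}\delta_{\gamma\Delta}*\sum_{k\ge0}\bar\nu^{*k}(-\Delta)^k/k!$, a finite signed measure whose Fourier transform is $u\mapsto1/\varphi(-u)$. For a bounded function $f$ and finite (signed) measure $\mu$, $f*\mu(x):=\int f(x-y)\mu(dy)$. *)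

theory Defs
  imports "HOL-Probability.Probability"
begin

definition fun_conv :: "(real \<Rightarrow> real) \<Rightarrow> real measure \<Rightarrow> real \<Rightarrow> real" where
  "fun_conv f \<mu> x = (\<integral>y. f (x - y) \<partial>\<mu>)"

primrec conv_pow :: "real measure \<Rightarrow> nat \<Rightarrow> real measure" where
  "conv_pow \<nu> 0 = return borel 0"
| "conv_pow \<nu> (Suc k) = convolution \<nu> (conv_pow \<nu> k)"

definition nu_bar :: "real measure \<Rightarrow> real measure" where
  "nu_bar \<nu> = distr \<nu> borel uminus"

definition P_meas :: "real \<Rightarrow> real \<Rightarrow> real \<Rightarrow> real measure \<Rightarrow> real measure" where
  "P_meas \<gamma> lam \<Delta> \<nu> = measure_of UNIV (sets borel)
     (\<lambda>A. \<Sum>k. ennreal (exp (- lam * \<Delta>) * \<Delta> ^ k / fact k)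
                 * emeasure (convolution (return borel (\<gamma> * \<Delta>)) (conv_pow \<nu> k)) A)"

text \<open>f * F^{-1}[phi^{-1}(-.)], where F^{-1}[phi^{-1}(-.)] is the finite signed measure
  e^{lam Delta} delta_{gamma Delta} * sum_k nubar^{*k} (-Delta)^k / k!; the convolution of f
  with this series of measures is the corresponding series of convolutions.\<close>
definition conv_inv :: "(real \<Rightarrow> real) \<Rightarrow> real \<Rightarrow> real \<Rightarrow> real \<Rightarrow> real measure \<Rightarrow> real \<Rightarrow> real" where
  "conv_inv f \<gamma> lam \<Delta> \<nu> x = (\<Sum>k. exp (lam * \<Delta>) * (- \<Delta>) ^ k / fact k
       * fun_conv f (convolution (return borel (\<gamma> * \<Delta>)) (conv_pow (nu_bar \<nu>) k)) x)"

end

theory Submission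
  imports Defs
begin

text \<open>Write t = \<lambda>\<Delta>. The k-th term of the series defining P has total mass e^(-t) t^k/k!,
  and the k-th term of the series defining f * F^-1[\<phi>^-1(-.)] is bounded by e^t sup|f| t^k/k!.
  Truncating both series after their first two terms therefore costs O(t^2), uniformly in \<gamma> and
  \<nu>. Expanding the remaining finite expression to first order in \<Delta>, with e^t = 1 + t + O(t^2),
  gives the claim.\<close>

lemma space_eq_UNIV_if_sets_borel:
  fixes M :: "real measure"
  assumes "sets M = sets borel"
  shows "space M = UNIV"
  using assms by (metis sets_eq_imp_space_eq space_borel)

lemma abs_mult_le: "\<bar>a\<bar> \<le> A \<Longrightarrow> \<bar>b\<bar> \<le> B \<Longrightarrow> \<bar>a * b\<bar> \<le> A * (B::real)"
  by (simp add: abs_mult mult_mono')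

lemma abs_mult_sub_mult_le:
  fixes a1 a2 p1 p2 :: real
  assumes "\<bar>a1 - p1\<bar> \<le> d1" "\<bar>a2 - p2\<bar> \<le> d2" "\<bar>a2\<bar> \<le> B" "\<bar>p1\<bar> \<le> C"
  shows "\<bar>a1 * a2 - p1 * p2\<bar> \<le> d1 * B + C * d2"
proof -
  have "a1 * a2 - p1 * p2 = (a1 - p1) * a2 + p1 * (a2 - p2)"
    by (simp add: algebra_simps)
  then show ?thesis
    using abs_mult_le[OF assms(1,3)] abs_mult_le[OF assms(4,2)] by (simp add: abs_le_iff)
qed

lemma abs_integral_le_const:
  fixes g :: "'a \<Rightarrow> real"
  assumes "finite_measure M" "g \<in> borel_measurable M" "\<And>x. \<bar>g x\<bar> \<le> B"
  shows "\<bar>\<integral>x. g x \<partial>M\<bar> \<le> B * measure M (space M)"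
proof -
  interpret finite_measure M by fact
  have int: "integrable M g" using assms by (intro integrable_const_bound[of _ B]) auto
  have "\<bar>\<integral>x. g x \<partial>M\<bar> \<le> (\<integral>x. \<bar>g x\<bar> \<partial>M)"
    by (rule integral_abs_bound)
  also have "\<dots> \<le> (\<integral>x. B \<partial>M)"
    using int assms(3) by (intro integral_mono) auto
  finally show ?thesis by (simp add: mult.commute)
qed

lemma abs_integral_sub_le:
  fixes f g :: "'a \<Rightarrow> real"
  assumes M: "finite_measure M" and [measurable]: "f \<in> borel_measurable M" "g \<in> borel_measurable M"
    and "\<And>x. \<bar>f x\<bar> \<le> Bf" "\<And>x. \<bar>g x\<bar> \<le> Bg" and d: "\<And>x. \<bar>f x - g x\<bar> \<le> d"
  shows "\<bar>(\<integral>x. f x \<partial>M) - (\<integral>x. g x \<partial>M)\<bar> \<le> d * measure M (space M)"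
proof -
  interpret finite_measure M by fact
  have "integrable M f" using assms(4) by (intro integrable_const_bound[of _ Bf]) auto
  moreover have "integrable M g" using assms(5) by (intro integrable_const_bound[of _ Bg]) auto
  ultimately have "(\<integral>x. f x \<partial>M) - (\<integral>x. g x \<partial>M) = (\<integral>x. f x - g x \<partial>M)" by simp
  then show ?thesis using abs_integral_le_const[OF M _ d] by simp
qed

lemma exp_series_sums: "(\<lambda>k. t ^ k / fact k) sums exp (t::real)"
  using exp_converges[of t] by (simp add: divide_inverse mult.commute)

lemma exp_dominated_series_bounds:
  fixes u :: "nat \<Rightarrow> real"
  assumes ub: "\<And>k. \<bar>u k\<bar> \<le> K * (t ^ k / fact k)" and t0: "0 \<le> t"
  shows "\<bar>suminf u\<bar> \<le> K * exp t" "\<bar>suminf u - u 0 - u 1\<bar> \<le> K * t\<^sup>2 * exp t"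
proof -
  note es = exp_series_sums[of t]
  have se: "summable (\<lambda>k. t ^ k / fact k)" using es by (rule sums_summable)
  have K0: "0 \<le> K" using ub[of 0] by simp
  have sKe: "summable (\<lambda>k. K * (t ^ k / fact k))" using se by (rule summable_mult)
  have sa: "summable (\<lambda>k. \<bar>u k\<bar>)"
    by (rule summable_comparison_test'[OF sKe]) (use ub in simp)
  have "\<bar>suminf u\<bar> \<le> (\<Sum>k. \<bar>u k\<bar>)" using sa by (rule summable_rabs)
  also have "\<dots> \<le> (\<Sum>k. K * (t ^ k / fact k))" by (rule suminf_le[OF ub sa sKe])
  also have "\<dots> = K * exp t" using sums_unique[OF sums_mult[OF es, of K]] by simp
  finally show "\<bar>suminf u\<bar> \<le> K * exp t" .
  have split: "suminf u = (\<Sum>k. u (k + 2)) + u 0 + u 1"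
    using suminf_split_initial_segment[OF summable_rabs_cancel[OF sa], of 2]
    by (simp add: numeral_2_eq_2)
  have sa2: "summable (\<lambda>k. \<bar>u (k + 2)\<bar>)" using sa by (subst summable_iff_shift)
  have sKe2: "summable (\<lambda>k. K * t\<^sup>2 * (t ^ k / fact k))" using se by (rule summable_mult)
  have tail: "\<bar>u (k + 2)\<bar> \<le> K * t\<^sup>2 * (t ^ k / fact k)" for k
  proof -
    have "t ^ (k + 2) / fact (k + 2) \<le> t ^ (k + 2) / fact k"
      using t0 fact_mono[of k "k + 2", where 'a=real] by (intro divide_left_mono) auto
    also have "\<dots> = t\<^sup>2 * (t ^ k / fact k)" by (simp add: power_add power2_eq_square)
    finally show ?thesis
      using ub[of "k + 2"] mult_left_mono[OF _ K0] by (fastforce simp: mult.assoc)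
  qed
  have "\<bar>\<Sum>k. u (k + 2)\<bar> \<le> (\<Sum>k. \<bar>u (k + 2)\<bar>)" using sa2 by (rule summable_rabs)
  also have "\<dots> \<le> (\<Sum>k. K * t\<^sup>2 * (t ^ k / fact k))" by (rule suminf_le[OF tail sa2 sKe2])
  also have "\<dots> = K * t\<^sup>2 * exp t" using sums_unique[OF sums_mult[OF es, of "K * t\<^sup>2"]] by simp
  finally show "\<bar>suminf u - u 0 - u 1\<bar> \<le> K * t\<^sup>2 * exp t" using split by simp
qed

lemma exp_le_3_and_taylor_bounds:
  fixes t :: real
  assumes "0 \<le> t" "t \<le> 1"
  shows "exp t \<le> 3" "\<bar>exp t - 1 - t\<bar> \<le> 3 * t\<^sup>2" "\<bar>exp t - 1\<bar> \<le> 4 * t"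
proof -
  show e3: "exp t \<le> 3" using exp_le assms by (smt (verit) exp_le_cancel_iff)
  note es = exp_series_sums[of t]
  have "\<bar>exp t - 1 - t\<bar> \<le> 1 * t\<^sup>2 * exp t"
    using exp_dominated_series_bounds(2)[of "\<lambda>k. t ^ k / fact k" 1 t] assms es
    by (simp add: sums_iff)
  also have "\<dots> \<le> 3 * t\<^sup>2" using mult_right_mono[OF e3, of "t\<^sup>2"] by (simp add: mult.commute)
  finally show "\<bar>exp t - 1 - t\<bar> \<le> 3 * t\<^sup>2" .
  moreover have "t\<^sup>2 \<le> t" using assms by (simp add: power2_eq_square mult_left_le_one_le)
  ultimately show "\<bar>exp t - 1\<bar> \<le> 4 * t" using assms by linarith
qed

lemma abs_exp_mult_sub_first_order_le:
  fixes t a b A B :: real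
  assumes t: "0 \<le> t" "t \<le> 1" and a: "\<bar>a\<bar> \<le> A" and b: "\<bar>b\<bar> \<le> B * t"
  shows "\<bar>exp t * (a + b) - (a + t * a + b)\<bar> \<le> (3 * A + 4 * B) * t\<^sup>2"
proof -
  have "exp t * (a + b) - (a + t * a + b) = (exp t - 1 - t) * a + (exp t - 1) * b"
    by (simp add: algebra_simps)
  moreover have "\<bar>(exp t - 1 - t) * a\<bar> \<le> 3 * t\<^sup>2 * A"
    using abs_mult_le[OF exp_le_3_and_taylor_bounds(2)[OF t] a] .
  moreover have "\<bar>(exp t - 1) * b\<bar> \<le> 4 * t * (B * t)"
    using abs_mult_le[OF exp_le_3_and_taylor_bounds(3)[OF t] b] .
  ultimately show ?thesis by (simp add: abs_le_iff power2_eq_square algebra_simps)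
qed

definition series_measure :: "(nat \<Rightarrow> real) \<Rightarrow> (nat \<Rightarrow> real measure) \<Rightarrow> real measure" where
  "series_measure w Q = measure_of UNIV (sets borel) (\<lambda>A. \<Sum>k. ennreal (w k) * emeasure (Q k) A)"

lemma sets_series_measure [simp, measurable_cong]: "sets (series_measure w Q) = sets borel"
  by (simp add: series_measure_def) (metis sets.sigma_sets_eq space_borel)

lemma space_series_measure [simp]: "space (series_measure w Q) = UNIV"
  by (simp add: series_measure_def)

lemma emeasure_series_measure:
  assumes sQ: "\<And>k. sets (Q k) = sets borel" and A: "A \<in> sets borel"
  shows "emeasure (series_measure w Q) A = (\<Sum>k. ennreal (w k) * emeasure (Q k) A)"
  unfolding series_measure_def
proof (rule emeasure_measure_of_sigma)
  show "sigma_algebra UNIV (sets borel)"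
    by (metis sets.sigma_algebra_axioms space_borel)
  show "positive (sets borel) (\<lambda>A. \<Sum>k. ennreal (w k) * emeasure (Q k) A)"
    by (simp add: positive_def)
  show "countably_additive (sets borel) (\<lambda>A. \<Sum>k. ennreal (w k) * emeasure (Q k) A)"
  proof (rule countably_additiveI)
    fix A :: "nat \<Rightarrow> real set" assume A: "range A \<subseteq> sets borel" "disjoint_family A"
    have "(\<Sum>i. \<Sum>k. ennreal (w k) * emeasure (Q k) (A i))
        = (\<Sum>i. \<integral>\<^sup>+k. ennreal (w k) * emeasure (Q k) (A i) \<partial>count_space UNIV)"
      by (simp add: nn_integral_count_space_nat)
    also have "\<dots> = (\<integral>\<^sup>+k. (\<Sum>i. ennreal (w k) * emeasure (Q k) (A i)) \<partial>count_space UNIV)"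
      by (rule nn_integral_suminf[symmetric]) simp
    also have "\<dots> = (\<integral>\<^sup>+k. ennreal (w k) * emeasure (Q k) (\<Union>i. A i) \<partial>count_space UNIV)"
      using A sQ by (simp add: suminf_emeasure)
    also have "\<dots> = (\<Sum>k. ennreal (w k) * emeasure (Q k) (\<Union>i. A i))"
      by (simp add: nn_integral_count_space_nat)
    finally show "(\<Sum>i. \<Sum>k. ennreal (w k) * emeasure (Q k) (A i))
        = (\<Sum>k. ennreal (w k) * emeasure (Q k) (\<Union>i. A i))" .
  qed
qed (use A in auto)

lemma nn_integral_series_measure:
  assumes sQ: "\<And>k. sets (Q k) = sets borel" and g: "g \<in> borel_measurable borel"
  shows "(\<integral>\<^sup>+x. g x \<partial>series_measure w Q) = (\<Sum>k. ennreal (w k) * (\<integral>\<^sup>+x. g x \<partial>Q k))"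
proof -
  have spQ: "\<And>k. space (Q k) = UNIV" using sQ by (rule space_eq_UNIV_if_sets_borel)
  have "g \<in> borel_measurable (series_measure w Q)" using g by (simp cong: measurable_cong_sets)
  then show ?thesis
  proof induction
    case (cong f g)
    then show ?case by (simp add: spQ cong: nn_integral_cong_simp)
  next
    case (set A)
    then show ?case using sQ by (simp add: emeasure_series_measure)
  next
    case (mult u c)
    have "\<And>k. u \<in> borel_measurable (Q k)" using mult(2) sQ by (simp cong: measurable_cong_sets)
    then show ?case using mult by (simp add: nn_integral_cmult mult.left_commute)
  next
    case (add u v)
    have "\<And>k. u \<in> borel_measurable (Q k)" "\<And>k. v \<in> borel_measurable (Q k)"
      using add sQ by (simp_all cong: measurable_cong_sets)
    then show ?case using add
      by (simp add: nn_integral_add distrib_left suminf_add[OF summableI summableI])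
  next
    case (seq U)
    have mQ: "\<And>k i. U i \<in> borel_measurable (Q k)"
      using seq sQ by (simp cong: measurable_cong_sets)
    have mono: "incseq (\<lambda>i. ennreal (w k) * (\<integral>\<^sup>+x. U i x \<partial>Q k))" for k
    proof (rule incseq_SucI)
      fix i
      have "U i \<le> U (Suc i)" using \<open>incseq U\<close> by (simp add: incseq_Suc_iff)
      then have "(\<integral>\<^sup>+x. U i x \<partial>Q k) \<le> (\<integral>\<^sup>+x. U (Suc i) x \<partial>Q k)"
        by (intro nn_integral_mono) (simp add: le_fun_def)
      then show "ennreal (w k) * (\<integral>\<^sup>+x. U i x \<partial>Q k) \<le> ennreal (w k) * (\<integral>\<^sup>+x. U (Suc i) x \<partial>Q k)"
        by (rule mult_left_mono) simp
    qed
    have "(\<integral>\<^sup>+x. (SUP i. U i) x \<partial>series_measure w Q) = (SUP i. \<integral>\<^sup>+x. U i x \<partial>series_measure w Q)"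
      unfolding SUP_apply by (rule nn_integral_monotone_convergence_SUP) (use seq in auto)
    also have "\<dots> = (SUP i. \<Sum>k. ennreal (w k) * (\<integral>\<^sup>+x. U i x \<partial>Q k))"
      using seq by simp
    also have "\<dots> = (\<Sum>k. SUP i. ennreal (w k) * (\<integral>\<^sup>+x. U i x \<partial>Q k))"
      by (rule ennreal_suminf_SUP_eq[symmetric]) (rule mono)
    also have "\<dots> = (\<Sum>k. ennreal (w k) * (\<integral>\<^sup>+x. (SUP i. U i) x \<partial>Q k))"
    proof (rule suminf_cong)
      fix k
      have "(\<integral>\<^sup>+x. (SUP i. U i) x \<partial>Q k) = (SUP i. \<integral>\<^sup>+x. U i x \<partial>Q k)"
        unfolding SUP_apply by (rule nn_integral_monotone_convergence_SUP) (use seq mQ in auto)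
      then show "(SUP i. ennreal (w k) * (\<integral>\<^sup>+x. U i x \<partial>Q k))
          = ennreal (w k) * (\<integral>\<^sup>+x. (SUP i. U i) x \<partial>Q k)"
        by (simp add: SUP_mult_left_ennreal)
    qed
    finally show ?case .
  qed
qed

context
  fixes w :: "nat \<Rightarrow> real" and Q :: "nat \<Rightarrow> real measure"
  assumes fin: "\<And>k. finite_measure (Q k)" and sQ: "\<And>k. sets (Q k) = sets borel"
    and w: "\<And>k. 0 \<le> w k" and sm: "summable (\<lambda>k. w k * measure (Q k) UNIV)"
begin

lemma summable_weighted_integral:
  assumes g[measurable]: "g \<in> borel_measurable borel" and gB: "\<And>x. \<bar>g x\<bar> \<le> B"
  shows "summable (\<lambda>k. w k * (\<integral>x. g x \<partial>Q k))"
proof (rule summable_comparison_test')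
  show "summable (\<lambda>k. B * (w k * measure (Q k) UNIV))" using sm by (rule summable_mult)
  fix k :: nat
  have "\<bar>\<integral>x. g x \<partial>Q k\<bar> \<le> B * measure (Q k) UNIV"
    using abs_integral_le_const[OF fin _ gB] sQ space_eq_UNIV_if_sets_borel[OF sQ]
    by (simp cong: measurable_cong_sets)
  then have "w k * \<bar>\<integral>x. g x \<partial>Q k\<bar> \<le> w k * (B * measure (Q k) UNIV)"
    using w by (rule mult_left_mono)
  then show "norm (w k * (\<integral>x. g x \<partial>Q k)) \<le> B * (w k * measure (Q k) UNIV)"
    using w by (simp add: abs_mult mult.left_commute)
qed

lemma nn_integral_series_measure_real:
  assumes g[measurable]: "g \<in> borel_measurable borel"
    and g0: "\<And>x. 0 \<le> g x" and gB: "\<And>x. g x \<le> B"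
  shows "(\<integral>\<^sup>+x. g x \<partial>series_measure w Q) = ennreal (\<Sum>k. w k * (\<integral>x. g x \<partial>Q k))"
proof -
  have intQ: "integrable (Q k) g" for k
    using g0 gB sQ by (intro finite_measure.integrable_const_bound[OF fin, of _ B])
      (auto cong: measurable_cong_sets)
  have "(\<integral>\<^sup>+x. g x \<partial>series_measure w Q) = (\<Sum>k. ennreal (w k) * (\<integral>\<^sup>+x. g x \<partial>Q k))"
    using nn_integral_series_measure[OF sQ] by simp
  also have "\<dots> = (\<Sum>k. ennreal (w k * (\<integral>x. g x \<partial>Q k)))"
    using intQ g0 w by (simp add: nn_integral_eq_integral ennreal_mult)
  also have "\<dots> = ennreal (\<Sum>k. w k * (\<integral>x. g x \<partial>Q k))"
    using summable_weighted_integral[OF g, of B] g0 gB w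
    by (intro suminf_ennreal_eq) (auto simp: summable_sums integral_nonneg_AE)
  finally show ?thesis .
qed

lemma finite_measure_series_measure: "finite_measure (series_measure w Q)"
  and measure_series_measure: "measure (series_measure w Q) UNIV = (\<Sum>k. w k * measure (Q k) UNIV)"
proof -
  define S where "S = (\<Sum>k. w k * measure (Q k) UNIV)"
  have "0 \<le> S" unfolding S_def using w by (intro suminf_nonneg sm) simp
  moreover have "emeasure (series_measure w Q) UNIV = ennreal S"
    using nn_integral_series_measure_real[of "\<lambda>_. 1" 1]
    by (simp add: space_eq_UNIV_if_sets_borel[OF sQ] S_def)
  ultimately show "finite_measure (series_measure w Q)"
    and "measure (series_measure w Q) UNIV = S"
    by (auto intro: finite_measureI simp: measure_def)
qed

lemma integral_series_measure:
  assumes h[measurable]: "h \<in> borel_measurable borel" and hB: "\<And>x. \<bar>h x\<bar> \<le> B"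
  shows "(\<integral>x. h x \<partial>series_measure w Q) = (\<Sum>k. w k * (\<integral>x. h x \<partial>Q k))"
proof -
  \<comment> \<open>shifting by the bound makes the integrand nonnegative\<close>
  define S where "S = (\<Sum>k. w k * measure (Q k) UNIV)"
  interpret P: finite_measure "series_measure w Q" by (rule finite_measure_series_measure)
  have spQ: "\<And>k. space (Q k) = UNIV" using sQ by (rule space_eq_UNIV_if_sets_borel)
  have g0: "\<And>x. 0 \<le> h x + B" and gB: "\<And>x. h x + B \<le> 2 * B" using hB by (smt (verit))+
  have intQ: "integrable (Q k) h" for k
    using hB sQ by (intro finite_measure.integrable_const_bound[OF fin, of _ B])
      (auto cong: measurable_cong_sets)
  have intP: "integrable (series_measure w Q) h"
    using hB by (intro P.integrable_const_bound[of _ B]) auto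
  have "(\<integral>x. h x \<partial>series_measure w Q) + B * S = (\<integral>x. h x + B \<partial>series_measure w Q)"
    using intP measure_series_measure by (simp add: S_def mult.commute)
  also have "\<dots> = enn2real (\<integral>\<^sup>+x. ennreal (h x + B) \<partial>series_measure w Q)"
    using g0 by (intro integral_eq_nn_integral) auto
  also have "\<dots> = (\<Sum>k. w k * (\<integral>x. h x + B \<partial>Q k))"
    using nn_integral_series_measure_real[of "\<lambda>x. h x + B" "2 * B"] g0 gB w
    by (simp add: suminf_nonneg integral_nonneg_AE
        summable_weighted_integral[of "\<lambda>x. h x + B" "2 * B"])
  also have "\<dots> = (\<Sum>k. w k * (\<integral>x. h x \<partial>Q k) + B * (w k * measure (Q k) UNIV))"
  proof (rule suminf_cong)
    fix k
    interpret finite_measure "Q k" by (rule fin)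
    have "(\<integral>x. h x + B \<partial>Q k) = (\<integral>x. h x \<partial>Q k) + B * measure (Q k) UNIV"
      using intQ[of k] by (simp add: spQ)
    then show "w k * (\<integral>x. h x + B \<partial>Q k)
        = w k * (\<integral>x. h x \<partial>Q k) + B * (w k * measure (Q k) UNIV)"
      by (simp add: algebra_simps)
  qed
  also have "\<dots> = (\<Sum>k. w k * (\<integral>x. h x \<partial>Q k)) + B * S"
    using summable_weighted_integral[OF h hB] sm unfolding S_def
    by (subst suminf_add[symmetric]) (auto intro: summable_mult simp: suminf_mult)
  finally show ?thesis by simp
qed

end

lemma integral_convolution:
  fixes g :: "real \<Rightarrow> real"
  assumes M: "finite_measure M" and N: "finite_measure N"
    and [measurable_cong]: "sets M = sets borel" "sets N = sets borel"
    and g[measurable]: "g \<in> borel_measurable borel" and gB: "\<And>x. \<bar>g x\<bar> \<le> B"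
  shows "(\<integral>x. g x \<partial>(M \<star> N)) = (\<integral>x. (\<integral>y. g (x + y) \<partial>N) \<partial>M)"
proof -
  interpret M: finite_measure M by fact
  interpret N: finite_measure N by fact
  interpret pair_sigma_finite M N ..
  interpret P: finite_measure "M \<Otimes>\<^sub>M N" by (rule finite_measure_pair_measure) fact+
  have "integrable (M \<Otimes>\<^sub>M N) (\<lambda>(x, y). g (x + y))"
    by (rule P.integrable_const_bound[of _ B]) (use gB in auto)
  from integral_fst'[OF this] show ?thesis
    unfolding convolution_def by (simp add: integral_distr case_prod_beta')
qed

lemma measure_convolution_UNIV:
  fixes M N :: "real measure"
  assumes M: "finite_measure M" and N: "finite_measure N"
    and sM: "sets M = sets borel" and sN: "sets N = sets borel"
  shows "measure (M \<star> N) UNIV = measure M UNIV * measure N UNIV"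
proof -
  have "(\<integral>x. (1::real) \<partial>(M \<star> N)) = (\<integral>x. (\<integral>y. 1 \<partial>N) \<partial>M)"
    by (rule integral_convolution[OF M N sM sN, of _ 1]) auto
  then show ?thesis
    using space_eq_UNIV_if_sets_borel[OF sM] space_eq_UNIV_if_sets_borel[OF sN] by simp
qed

lemma finite_measure_return_borel: "finite_measure (return borel (c::real))"
  by (rule finite_measureI) simp

lemma integral_return_convolution:
  fixes g :: "real \<Rightarrow> real"
  assumes N: "finite_measure N" and sN[measurable_cong]: "sets N = sets borel"
    and g[measurable]: "g \<in> borel_measurable borel" and gB: "\<And>x. \<bar>g x\<bar> \<le> B"
  shows "(\<integral>x. g x \<partial>(return borel c \<star> N)) = (\<integral>y. g (c + y) \<partial>N)"
proof -
  interpret N: finite_measure N by fact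
  have "(\<lambda>x. \<integral>y. g (x + y) \<partial>N) \<in> borel_measurable borel"
    by (rule N.borel_measurable_lebesgue_integral) simp
  then show ?thesis
    by (subst integral_convolution[OF finite_measure_return_borel N _ sN g gB])
      (simp_all add: integral_return)
qed

lemma sets_conv_pow [simp, measurable_cong]: "sets (conv_pow N k) = sets borel"
  by (cases k) simp_all

lemma finite_measure_conv_pow:
  fixes N :: "real measure"
  assumes N: "finite_measure N" and sN: "sets N = sets borel"
  shows "finite_measure (conv_pow N k)"
    and "measure (conv_pow N k) UNIV = measure N UNIV ^ k"
proof -
  have "finite_measure (conv_pow N k) \<and> measure (conv_pow N k) UNIV = measure N UNIV ^ k"
  proof (induction k)
    case 0
    show ?case by (simp add: finite_measure_return_borel measure_def)
  next
    case (Suc k)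
    then show ?case
      using convolution_finite[OF N _ _ sN] measure_convolution_UNIV[OF N _ sN] by simp
  qed
  then show "finite_measure (conv_pow N k)" "measure (conv_pow N k) UNIV = measure N UNIV ^ k"
    by auto
qed

lemma integral_conv_pow_1:
  fixes g :: "real \<Rightarrow> real"
  assumes N: "finite_measure N" and sN[measurable_cong]: "sets N = sets borel"
    and g[measurable]: "g \<in> borel_measurable borel" and gB: "\<And>x. \<bar>g x\<bar> \<le> B"
  shows "(\<integral>x. g x \<partial>conv_pow N 1) = (\<integral>x. g x \<partial>N)"
proof -
  have "(\<integral>x. g x \<partial>conv_pow N 1) = (\<integral>x. (\<integral>y. g (x + y) \<partial>return borel 0) \<partial>N)"
    using integral_convolution[OF N finite_measure_return_borel sN _ g gB] by simp
  also have "\<dots> = (\<integral>x. g x \<partial>N)"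
    by (rule Bochner_Integration.integral_cong) (simp_all add: integral_return)
  finally show ?thesis .
qed

lemma
  fixes N :: "real measure"
  assumes N: "finite_measure N" and sN[measurable_cong]: "sets N = sets borel"
  shows finite_measure_nu_bar: "finite_measure (nu_bar N)"
    and measure_nu_bar: "measure (nu_bar N) UNIV = measure N UNIV"
proof -
  interpret finite_measure N by fact
  show "finite_measure (nu_bar N)" unfolding nu_bar_def by (intro finite_measure_distr) simp
  show "measure (nu_bar N) UNIV = measure N UNIV"
    unfolding nu_bar_def by (subst measure_distr) (simp_all add: space_eq_UNIV_if_sets_borel[OF sN])
qed

lemma sets_nu_bar [simp, measurable_cong]: "sets (nu_bar N) = sets borel"
  by (simp add: nu_bar_def)

lemma abs_fun_conv_le:
  assumes mu: "finite_measure \<mu>" and s: "sets \<mu> = sets borel"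
    and f[measurable]: "f \<in> borel_measurable borel" and fb: "\<And>x. \<bar>f x\<bar> \<le> M"
  shows "\<bar>fun_conv f \<mu> x\<bar> \<le> M * measure \<mu> UNIV"
proof -
  have "(\<lambda>y. f (x - y)) \<in> borel_measurable \<mu>" using s by (simp cong: measurable_cong_sets)
  from abs_integral_le_const[OF mu this fb] show ?thesis
    by (simp add: fun_conv_def space_eq_UNIV_if_sets_borel[OF s])
qed

lemma borel_measurable_fun_conv:
  assumes mu: "finite_measure \<mu>" and s[measurable_cong]: "sets \<mu> = sets borel"
    and f[measurable]: "f \<in> borel_measurable borel"
  shows "fun_conv f \<mu> \<in> borel_measurable borel"
proof -
  interpret finite_measure \<mu> by fact
  have "(\<lambda>x. \<integral>y. f (x - y) \<partial>\<mu>) \<in> borel_measurable borel"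
    by (rule borel_measurable_lebesgue_integral) simp
  then show ?thesis unfolding fun_conv_def[abs_def] .
qed

lemma P_meas_eq_series_measure:
  "P_meas \<gamma> lam \<Delta> \<nu> = series_measure (\<lambda>k. exp (- lam * \<Delta>) * \<Delta> ^ k / fact k)
     (\<lambda>k. return borel (\<gamma> * \<Delta>) \<star> conv_pow \<nu> k)"
  by (simp add: P_meas_def series_measure_def)

lemma sets_P_meas [simp, measurable_cong]: "sets (P_meas \<gamma> lam \<Delta> \<nu>) = sets borel"
  by (simp add: P_meas_eq_series_measure)

lemma
  fixes N :: "real measure"
  assumes "finite_measure N" "sets N = sets borel"
  shows finite_measure_return_conv_pow: "finite_measure (return borel c \<star> conv_pow N k)"
    and measure_return_conv_pow: "measure (return borel c \<star> conv_pow N k) UNIV = measure N UNIV ^ k"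
  using finite_measure_conv_pow[OF assms, of k]
    convolution_finite[OF finite_measure_return_borel, of "conv_pow N k" c]
    measure_convolution_UNIV[OF finite_measure_return_borel, of "conv_pow N k" c]
  by (simp_all add: measure_def)

text \<open>e^(-\<lambda>\<Delta>) times the sum of the terms k = 0 and k = 1 of the series defining conv_inv.\<close>

definition conv_inv_trunc :: "(real \<Rightarrow> real) \<Rightarrow> real \<Rightarrow> real \<Rightarrow> real measure \<Rightarrow> real \<Rightarrow> real" where
  "conv_inv_trunc f \<gamma> \<Delta> \<nu> x = f (x - \<gamma> * \<Delta>) - \<Delta> * fun_conv f (nu_bar \<nu>) (x - \<gamma> * \<Delta>)"

context
  fixes \<gamma> lam \<Delta> :: real and \<nu> :: "real measure"
  assumes fin: "finite_measure \<nu>" and s[measurable_cong]: "sets \<nu> = sets borel"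
    and mass: "measure \<nu> UNIV = lam" and D: "0 \<le> \<Delta>"
begin

lemma lam_mult_Delta_nonneg: "0 \<le> lam * \<Delta>"
  using D mass measure_nonneg[of \<nu> UNIV] by simp

lemma sums_P_meas_weights:
  "(\<lambda>k. exp (- lam * \<Delta>) * \<Delta> ^ k / fact k * measure (return borel (\<gamma> * \<Delta>) \<star> conv_pow \<nu> k) UNIV)
     sums 1"
  using sums_mult[OF exp_series_sums[of "lam * \<Delta>"], of "exp (- (lam * \<Delta>))"]
  by (simp add: measure_return_conv_pow[OF fin s] mass exp_minus power_mult_distrib field_simps)

lemma prob_space_P_meas: "prob_space (P_meas \<gamma> lam \<Delta> \<nu>)"
proof -
  have "finite_measure (P_meas \<gamma> lam \<Delta> \<nu>)" "measure (P_meas \<gamma> lam \<Delta> \<nu>) UNIV = 1"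
    using finite_measure_series_measure measure_series_measure sums_P_meas_weights D
      finite_measure_return_conv_pow[OF fin s]
    unfolding P_meas_eq_series_measure by (auto simp: sums_iff)
  then show ?thesis
    by (intro prob_spaceI)
      (simp add: finite_measure.emeasure_eq_measure space_eq_UNIV_if_sets_borel)
qed

lemma integral_P_meas_approx:
  assumes h[measurable]: "h \<in> borel_measurable borel" and hB: "\<And>x. \<bar>h x\<bar> \<le> H"
  shows "\<bar>(\<integral>x. h x \<partial>P_meas \<gamma> lam \<Delta> \<nu>)
           - exp (- (lam * \<Delta>)) * (h (\<gamma> * \<Delta>) + \<Delta> * (\<integral>y. h (\<gamma> * \<Delta> + y) \<partial>\<nu>))\<bar>
         \<le> H * (lam * \<Delta>)\<^sup>2"
proof -
  define c where "c = \<gamma> * \<Delta>"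
  define t where "t = lam * \<Delta>"
  define w where "w k = exp (- lam * \<Delta>) * \<Delta> ^ k / fact k" for k
  define Q where "Q k = (return borel c \<star> conv_pow \<nu> k)" for k
  have Q: "finite_measure (Q k)" "sets (Q k) = sets borel" "measure (Q k) UNIV = lam ^ k" for k
    using finite_measure_return_conv_pow[OF fin s] measure_return_conv_pow[OF fin s] mass
    by (simp_all add: Q_def)
  have w0: "0 \<le> w k" for k using D by (simp add: w_def)
  have t0: "0 \<le> t" using lam_mult_Delta_nonneg by (simp add: t_def)
  have eq: "(\<integral>x. h x \<partial>P_meas \<gamma> lam \<Delta> \<nu>) = (\<Sum>k. w k * (\<integral>x. h x \<partial>Q k))"
    using integral_series_measure[OF Q(1,2) w0 _ h hB] sums_summable[OF sums_P_meas_weights]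
    by (simp add: P_meas_eq_series_measure w_def Q_def c_def)
  have "\<bar>w k * (\<integral>x. h x \<partial>Q k)\<bar> \<le> (exp (- t) * H) * (t ^ k / fact k)" for k
  proof -
    have "\<bar>\<integral>x. h x \<partial>Q k\<bar> \<le> H * lam ^ k"
      using abs_integral_le_const[OF Q(1)[of k] _ hB] Q(2,3) space_eq_UNIV_if_sets_borel[OF Q(2)]
      by (simp cong: measurable_cong_sets)
    then have "w k * \<bar>\<integral>x. h x \<partial>Q k\<bar> \<le> w k * (H * lam ^ k)" using w0 by (rule mult_left_mono)
    then show ?thesis
      using w0[of k] D by (simp add: abs_mult w_def t_def power_mult_distrib algebra_simps)
  qed
  from exp_dominated_series_bounds(2)[OF this t0]
  have tail: "\<bar>(\<Sum>k. w k * (\<integral>x. h x \<partial>Q k)) - w 0 * (\<integral>x. h x \<partial>Q 0) - w 1 * (\<integral>x. h x \<partial>Q 1)\<bar>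
      \<le> H * t\<^sup>2"
    by (simp add: exp_minus field_simps)
  have "(\<integral>x. h x \<partial>Q 0) = h c"
    using integral_return_convolution[OF finite_measure_return_borel _ h hB]
    by (simp add: Q_def integral_return)
  moreover have "(\<integral>x. h x \<partial>Q 1) = (\<integral>y. h (c + y) \<partial>\<nu>)"
  proof -
    have "(\<integral>x. h x \<partial>Q 1) = (\<integral>y. h (c + y) \<partial>conv_pow \<nu> 1)"
      unfolding Q_def
      by (rule integral_return_convolution[OF finite_measure_conv_pow(1)[OF fin s] _ h hB]) simp
    also have "\<dots> = (\<integral>y. h (c + y) \<partial>\<nu>)"
      by (rule integral_conv_pow_1[OF fin s]) (use hB in auto)
    finally show ?thesis .
  qed
  ultimately have "w 0 * (\<integral>x. h x \<partial>Q 0) + w 1 * (\<integral>x. h x \<partial>Q 1)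
      = exp (- t) * (h c + \<Delta> * (\<integral>y. h (c + y) \<partial>\<nu>))"
    by (simp add: w_def t_def algebra_simps)
  then show ?thesis
    using eq tail unfolding c_def[symmetric] t_def[symmetric] by (simp add: diff_diff_eq)
qed

lemma conv_inv_approx:
  assumes f[measurable]: "f \<in> borel_measurable borel" and fB: "\<And>x. \<bar>f x\<bar> \<le> M"
  shows "conv_inv f \<gamma> lam \<Delta> \<nu> \<in> borel_measurable borel"
    and "\<bar>conv_inv f \<gamma> lam \<Delta> \<nu> x\<bar> \<le> M * (exp (lam * \<Delta>))\<^sup>2"
    and "\<bar>conv_inv f \<gamma> lam \<Delta> \<nu> x - exp (lam * \<Delta>) * conv_inv_trunc f \<gamma> \<Delta> \<nu> x\<bar>
           \<le> M * (lam * \<Delta>)\<^sup>2 * (exp (lam * \<Delta>))\<^sup>2"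
proof -
  define c where "c = \<gamma> * \<Delta>"
  define t where "t = lam * \<Delta>"
  define Q where "Q k = (return borel c \<star> conv_pow (nu_bar \<nu>) k)" for k
  note nb = finite_measure_nu_bar[OF fin s] sets_nu_bar
  have nb_mass: "measure (nu_bar \<nu>) UNIV = lam" using measure_nu_bar[OF fin s] mass by simp
  have Q: "finite_measure (Q k)" "sets (Q k) = sets borel" "measure (Q k) UNIV = lam ^ k" for k
    using finite_measure_return_conv_pow[OF nb] measure_return_conv_pow[OF nb] nb_mass
    by (simp_all add: Q_def)
  have series: "conv_inv f \<gamma> lam \<Delta> \<nu> x = (\<Sum>k. exp t * (- \<Delta>) ^ k / fact k * fun_conv f (Q k) x)" for x
    by (simp add: conv_inv_def Q_def c_def t_def)
  have t0: "0 \<le> t" using lam_mult_Delta_nonneg by (simp add: t_def)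
  have ub: "\<bar>exp t * (- \<Delta>) ^ k / fact k * fun_conv f (Q k) x\<bar> \<le> (exp t * M) * (t ^ k / fact k)"
    for k x
  proof -
    have "\<bar>fun_conv f (Q k) x\<bar> \<le> M * lam ^ k"
      using abs_fun_conv_le[OF Q(1,2) f fB, of k x] Q(3) by simp
    then have "exp t * \<Delta> ^ k / fact k * \<bar>fun_conv f (Q k) x\<bar> \<le> exp t * \<Delta> ^ k / fact k * (M * lam ^ k)"
      using D by (intro mult_left_mono) auto
    then show ?thesis
      using D by (simp add: abs_mult power_abs t_def power_mult_distrib field_simps)
  qed
  show "conv_inv f \<gamma> lam \<Delta> \<nu> \<in> borel_measurable borel"
    unfolding series[abs_def] using borel_measurable_fun_conv[OF Q(1,2) f]
    by (intro borel_measurable_suminf) measurable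
  show "\<bar>conv_inv f \<gamma> lam \<Delta> \<nu> x\<bar> \<le> M * (exp (lam * \<Delta>))\<^sup>2"
    using exp_dominated_series_bounds(1)[OF ub[of _ x] t0]
    by (simp add: series t_def power2_eq_square mult_ac)
  have "fun_conv f (Q 0) x = (\<integral>y. f (x - (c + y)) \<partial>return borel 0)"
    unfolding fun_conv_def Q_def conv_pow.simps
    by (rule integral_return_convolution[OF finite_measure_return_borel]) (use fB in auto)
  then have "fun_conv f (Q 0) x = f (x - c)" by (simp add: integral_return)
  moreover have "fun_conv f (Q 1) x = fun_conv f (nu_bar \<nu>) (x - c)"
  proof -
    have "fun_conv f (Q 1) x = (\<integral>y. f (x - (c + y)) \<partial>conv_pow (nu_bar \<nu>) 1)"
      unfolding fun_conv_def Q_def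
      by (rule integral_return_convolution[OF finite_measure_conv_pow(1)[OF nb]]) (use fB in auto)
    also have "\<dots> = (\<integral>y. f (x - c - y) \<partial>nu_bar \<nu>)"
      by (subst integral_conv_pow_1[OF nb]) (use fB in \<open>auto simp: algebra_simps\<close>)
    finally show ?thesis by (simp add: fun_conv_def)
  qed
  ultimately show "\<bar>conv_inv f \<gamma> lam \<Delta> \<nu> x - exp (lam * \<Delta>) * conv_inv_trunc f \<gamma> \<Delta> \<nu> x\<bar>
      \<le> M * (lam * \<Delta>)\<^sup>2 * (exp (lam * \<Delta>))\<^sup>2"
    using exp_dominated_series_bounds(2)[OF ub[of _ x] t0]
    by (simp add: series conv_inv_trunc_def t_def c_def power2_eq_square algebra_simps)
qed

lemma abs_mult_fun_conv_nu_bar_le: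
  assumes f[measurable]: "f \<in> borel_measurable borel" and fB: "\<And>x. \<bar>f x\<bar> \<le> M"
  shows "\<bar>\<Delta> * fun_conv f (nu_bar \<nu>) x\<bar> \<le> M * (lam * \<Delta>)"
  using mult_left_mono[OF abs_fun_conv_le[OF finite_measure_nu_bar[OF fin s] sets_nu_bar f fB] D]
    measure_nu_bar[OF fin s] mass D
  by (simp add: abs_mult mult_ac)

lemma abs_conv_inv_trunc_shift_sub_le:
  assumes f[measurable]: "f \<in> borel_measurable borel" and fB: "\<And>x. \<bar>f x\<bar> \<le> M"
  shows "\<bar>conv_inv_trunc f \<gamma> \<Delta> \<nu> (\<gamma> * \<Delta> + y) - f y\<bar> \<le> M * (lam * \<Delta>)"
  using abs_mult_fun_conv_nu_bar_le[OF f fB, of y] by (simp add: conv_inv_trunc_def)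

lemma abs_conv_inv_trunc_le:
  assumes f[measurable]: "f \<in> borel_measurable borel" and fB: "\<And>x. \<bar>f x\<bar> \<le> M"
    and t1: "lam * \<Delta> \<le> 1"
  shows "\<bar>conv_inv_trunc f \<gamma> \<Delta> \<nu> x\<bar> \<le> 2 * M"
proof -
  have "M * (lam * \<Delta>) \<le> M" using mult_left_le[OF t1] fB[of 0] by simp
  then show ?thesis
    using fB[of "x - \<gamma> * \<Delta>"] abs_mult_fun_conv_nu_bar_le[OF f fB, of "x - \<gamma> * \<Delta>"]
    by (simp add: conv_inv_trunc_def abs_le_iff)
qed

lemma borel_measurable_conv_inv_trunc:
  assumes [measurable]: "f \<in> borel_measurable borel"
  shows "conv_inv_trunc f \<gamma> \<Delta> \<nu> \<in> borel_measurable borel"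
proof -
  have [measurable]: "fun_conv f (nu_bar \<nu>) \<in> borel_measurable borel"
    by (rule borel_measurable_fun_conv[OF finite_measure_nu_bar[OF fin s] sets_nu_bar]) simp
  show ?thesis unfolding conv_inv_trunc_def[abs_def] by measurable
qed

lemma abs_conv_inv_product_sub_le:
  assumes f1[measurable]: "f1 \<in> borel_measurable borel" and b1: "\<And>x. \<bar>f1 x\<bar> \<le> M1"
    and f2[measurable]: "f2 \<in> borel_measurable borel" and b2: "\<And>x. \<bar>f2 x\<bar> \<le> M2"
    and t1: "lam * \<Delta> \<le> 1"
  shows "\<bar>conv_inv f1 \<gamma> lam \<Delta> \<nu> x * conv_inv f2 \<gamma> lam \<Delta> \<nu> x
      - (exp (lam * \<Delta>))\<^sup>2 * (conv_inv_trunc f1 \<gamma> \<Delta> \<nu> x * conv_inv_trunc f2 \<gamma> \<Delta> \<nu> x)\<bar>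
    \<le> 135 * M1 * M2 * (lam * \<Delta>)\<^sup>2"
proof -
  define t where "t = lam * \<Delta>"
  define E where "E = exp t"
  have t0: "0 \<le> t" using lam_mult_Delta_nonneg by (simp add: t_def)
  have M20: "0 \<le> M2" using b2[of 0] by linarith
  have E: "0 \<le> E" "E \<le> 3" "E\<^sup>2 \<le> 9"
    using exp_le_3_and_taylor_bounds(1)[OF t0 t1[folded t_def]] power_mono[of E 3 2]
    by (simp_all add: E_def)
  have approx: "\<bar>conv_inv f \<gamma> lam \<Delta> \<nu> x - E * conv_inv_trunc f \<gamma> \<Delta> \<nu> x\<bar> \<le> 9 * M * t\<^sup>2"
    if "f \<in> borel_measurable borel" "\<And>x. \<bar>f x\<bar> \<le> M" for f M
    using conv_inv_approx(3)[OF that, of x] mult_left_mono[OF E(3), of "M * t\<^sup>2"] that(2)[of 0]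
    by (simp add: E_def t_def mult_ac)
  have G2: "\<bar>conv_inv f2 \<gamma> lam \<Delta> \<nu> x\<bar> \<le> 9 * M2"
    using conv_inv_approx(2)[OF f2 b2, of x] mult_left_mono[OF E(3) M20]
    by (simp add: E_def t_def mult_ac)
  have L1: "\<bar>E * conv_inv_trunc f1 \<gamma> \<Delta> \<nu> x\<bar> \<le> 3 * (2 * M1)"
    using abs_conv_inv_trunc_le[OF f1 b1 t1, of x] E by (intro abs_mult_le) auto
  have "E\<^sup>2 * (conv_inv_trunc f1 \<gamma> \<Delta> \<nu> x * conv_inv_trunc f2 \<gamma> \<Delta> \<nu> x)
      = (E * conv_inv_trunc f1 \<gamma> \<Delta> \<nu> x) * (E * conv_inv_trunc f2 \<gamma> \<Delta> \<nu> x)"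
    by (simp add: power2_eq_square mult_ac)
  with abs_mult_sub_mult_le[OF approx[OF f1 b1] approx[OF f2 b2] G2 L1]
  show ?thesis by (simp add: E_def t_def power2_eq_square algebra_simps)
qed

lemma abs_conv_inv_trunc_expansion_sub_le:
  assumes f1[measurable]: "f1 \<in> borel_measurable borel" and b1: "\<And>x. \<bar>f1 x\<bar> \<le> M1"
    and f2[measurable]: "f2 \<in> borel_measurable borel" and b2: "\<And>x. \<bar>f2 x\<bar> \<le> M2"
    and t1: "lam * \<Delta> \<le> 1"
  shows "\<bar>conv_inv_trunc f1 \<gamma> \<Delta> \<nu> (\<gamma> * \<Delta>) * conv_inv_trunc f2 \<gamma> \<Delta> \<nu> (\<gamma> * \<Delta>)
        + \<Delta> * (\<integral>y. conv_inv_trunc f1 \<gamma> \<Delta> \<nu> (\<gamma> * \<Delta> + y) * conv_inv_trunc f2 \<gamma> \<Delta> \<nu> (\<gamma> * \<Delta> + y) \<partial>\<nu>)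
      - (f1 0 * f2 0 + \<Delta> * ((\<integral>x. f1 x * f2 x \<partial>\<nu>)
          - f1 0 * fun_conv f2 (nu_bar \<nu>) 0 - f2 0 * fun_conv f1 (nu_bar \<nu>) 0))\<bar>
    \<le> 4 * M1 * M2 * (lam * \<Delta>)\<^sup>2"
proof -
  define t where "t = lam * \<Delta>"
  define L1 where "L1 = conv_inv_trunc f1 \<gamma> \<Delta> \<nu>"
  define L2 where "L2 = conv_inv_trunc f2 \<gamma> \<Delta> \<nu>"
  define d1 where "d1 = \<Delta> * fun_conv f1 (nu_bar \<nu>) 0"
  define d2 where "d2 = \<Delta> * fun_conv f2 (nu_bar \<nu>) 0"
  have L1c: "L1 (\<gamma> * \<Delta>) = f1 0 - d1" and L2c: "L2 (\<gamma> * \<Delta>) = f2 0 - d2"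
    by (simp_all add: L1_def L2_def d1_def d2_def conv_inv_trunc_def)
  have "\<bar>d1 * d2\<bar> \<le> M1 * t * (M2 * t)"
    using abs_mult_le[OF abs_mult_fun_conv_nu_bar_le[OF f1 b1] abs_mult_fun_conv_nu_bar_le[OF f2 b2]]
    by (simp add: d1_def d2_def t_def)
  then have quadratic: "\<bar>d1 * d2\<bar> \<le> M1 * M2 * t\<^sup>2" by (simp add: power2_eq_square mult_ac)
  have pointwise: "\<bar>L1 (\<gamma> * \<Delta> + y) * L2 (\<gamma> * \<Delta> + y) - f1 y * f2 y\<bar> \<le> M1 * t * (2 * M2) + M1 * (M2 * t)"
    for y
  proof (rule abs_mult_sub_mult_le)
    show "\<bar>L1 (\<gamma> * \<Delta> + y) - f1 y\<bar> \<le> M1 * t" "\<bar>L2 (\<gamma> * \<Delta> + y) - f2 y\<bar> \<le> M2 * t"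
      using abs_conv_inv_trunc_shift_sub_le[OF f1 b1] abs_conv_inv_trunc_shift_sub_le[OF f2 b2]
      by (simp_all add: L1_def L2_def t_def)
    show "\<bar>L2 (\<gamma> * \<Delta> + y)\<bar> \<le> 2 * M2"
      using abs_conv_inv_trunc_le[OF f2 b2 t1] by (simp add: L2_def)
  qed (rule b1)
  have L_meas[measurable]: "L1 \<in> borel_measurable borel" "L2 \<in> borel_measurable borel"
    using borel_measurable_conv_inv_trunc f1 f2 by (simp_all add: L1_def L2_def)
  define J where "J = (\<integral>y. L1 (\<gamma> * \<Delta> + y) * L2 (\<gamma> * \<Delta> + y) \<partial>\<nu>)"
  define I where "I = (\<integral>y. f1 y * f2 y \<partial>\<nu>)"
  have "\<bar>J - I\<bar> \<le> (M1 * t * (2 * M2) + M1 * (M2 * t)) * lam"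
    unfolding J_def I_def
  proof (rule abs_integral_sub_le[OF fin, THEN order_trans])
    show "\<bar>L1 (\<gamma> * \<Delta> + y) * L2 (\<gamma> * \<Delta> + y)\<bar> \<le> 2 * M1 * (2 * M2)" for y
      unfolding L1_def L2_def
      by (rule abs_mult_le[OF abs_conv_inv_trunc_le[OF f1 b1 t1] abs_conv_inv_trunc_le[OF f2 b2 t1]])
  qed (use pointwise abs_mult_le[OF b1 b2] mass space_eq_UNIV_if_sets_borel[OF s] in auto)
  then have "\<bar>\<Delta> * J - \<Delta> * I\<bar> \<le> \<Delta> * ((M1 * t * (2 * M2) + M1 * (M2 * t)) * lam)"
    using mult_left_mono[OF _ D] D by (simp add: abs_mult right_diff_distrib[symmetric])
  also have "\<dots> = 3 * M1 * M2 * t\<^sup>2"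
    by (simp add: t_def power2_eq_square algebra_simps)
  finally have linear: "\<bar>\<Delta> * J - \<Delta> * I\<bar> \<le> 3 * M1 * M2 * t\<^sup>2" .
  have "L1 (\<gamma> * \<Delta>) * L2 (\<gamma> * \<Delta>) + \<Delta> * J
      - (f1 0 * f2 0 + \<Delta> * (I - f1 0 * fun_conv f2 (nu_bar \<nu>) 0 - f2 0 * fun_conv f1 (nu_bar \<nu>) 0))
    = d1 * d2 + (\<Delta> * J - \<Delta> * I)"
    unfolding L1c L2c d1_def d2_def by (simp add: algebra_simps)
  with quadratic linear show ?thesis
    unfolding L1_def L2_def J_def I_def t_def by (simp add: abs_le_iff)
qed

lemma abs_first_order_term_le:
  assumes f1[measurable]: "f1 \<in> borel_measurable borel" and b1: "\<And>x. \<bar>f1 x\<bar> \<le> M1"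
    and f2[measurable]: "f2 \<in> borel_measurable borel" and b2: "\<And>x. \<bar>f2 x\<bar> \<le> M2"
  shows "\<bar>\<Delta> * ((\<integral>x. f1 x * f2 x \<partial>\<nu>) - f1 0 * fun_conv f2 (nu_bar \<nu>) 0 - f2 0 * fun_conv f1 (nu_bar \<nu>) 0)\<bar>
    \<le> 3 * M1 * M2 * (lam * \<Delta>)"
proof -
  have I: "\<bar>\<integral>x. f1 x * f2 x \<partial>\<nu>\<bar> \<le> M1 * M2 * lam"
    using abs_integral_le_const[OF fin _ abs_mult_le[OF b1 b2]] mass space_eq_UNIV_if_sets_borel[OF s]
    by (simp cong: measurable_cong_sets)
  have "\<bar>\<Delta> * (\<integral>x. f1 x * f2 x \<partial>\<nu>)\<bar> \<le> M1 * M2 * (lam * \<Delta>)"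
    using mult_left_mono[OF I D] D by (simp add: abs_mult mult_ac)
  moreover have "\<bar>f1 0 * (\<Delta> * fun_conv f2 (nu_bar \<nu>) 0)\<bar> \<le> M1 * (M2 * (lam * \<Delta>))"
    by (rule abs_mult_le[OF b1 abs_mult_fun_conv_nu_bar_le[OF f2 b2]])
  moreover have "\<bar>f2 0 * (\<Delta> * fun_conv f1 (nu_bar \<nu>) 0)\<bar> \<le> M2 * (M1 * (lam * \<Delta>))"
    by (rule abs_mult_le[OF b2 abs_mult_fun_conv_nu_bar_le[OF f1 b1]])
  ultimately show ?thesis by (simp add: abs_le_iff algebra_simps)
qed

lemma integral_conv_inv_product_sub_le:
  assumes f1[measurable]: "f1 \<in> borel_measurable borel" and b1: "\<And>x. \<bar>f1 x\<bar> \<le> M1"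
    and f2[measurable]: "f2 \<in> borel_measurable borel" and b2: "\<And>x. \<bar>f2 x\<bar> \<le> M2"
    and t1: "lam * \<Delta> \<le> 1"
  shows "\<bar>(\<integral>x. conv_inv f1 \<gamma> lam \<Delta> \<nu> x * conv_inv f2 \<gamma> lam \<Delta> \<nu> x \<partial>P_meas \<gamma> lam \<Delta> \<nu>)
      - (exp (lam * \<Delta>))\<^sup>2 *
        (\<integral>x. conv_inv_trunc f1 \<gamma> \<Delta> \<nu> x * conv_inv_trunc f2 \<gamma> \<Delta> \<nu> x \<partial>P_meas \<gamma> lam \<Delta> \<nu>)\<bar>
    \<le> 135 * M1 * M2 * (lam * \<Delta>)\<^sup>2"
proof -
  define E where "E = exp (lam * \<Delta>)"
  interpret P: prob_space "P_meas \<gamma> lam \<Delta> \<nu>" by (rule prob_space_P_meas)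
  have E: "0 \<le> E" "E\<^sup>2 \<le> 9"
    using exp_le_3_and_taylor_bounds(1)[OF lam_mult_Delta_nonneg t1] power_mono[of E 3 2]
    by (simp_all add: E_def)
  have [measurable]:
      "conv_inv f1 \<gamma> lam \<Delta> \<nu> \<in> borel_measurable borel" "conv_inv f2 \<gamma> lam \<Delta> \<nu> \<in> borel_measurable borel"
      "conv_inv_trunc f1 \<gamma> \<Delta> \<nu> \<in> borel_measurable borel" "conv_inv_trunc f2 \<gamma> \<Delta> \<nu> \<in> borel_measurable borel"
    using conv_inv_approx(1)[OF f1 b1] conv_inv_approx(1)[OF f2 b2]
      borel_measurable_conv_inv_trunc[OF f1] borel_measurable_conv_inv_trunc[OF f2] .
  have "\<bar>(\<integral>x. conv_inv f1 \<gamma> lam \<Delta> \<nu> x * conv_inv f2 \<gamma> lam \<Delta> \<nu> x \<partial>P_meas \<gamma> lam \<Delta> \<nu>)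
      - (\<integral>x. E\<^sup>2 * (conv_inv_trunc f1 \<gamma> \<Delta> \<nu> x * conv_inv_trunc f2 \<gamma> \<Delta> \<nu> x) \<partial>P_meas \<gamma> lam \<Delta> \<nu>)\<bar>
    \<le> 135 * M1 * M2 * (lam * \<Delta>)\<^sup>2 * measure (P_meas \<gamma> lam \<Delta> \<nu>) (space (P_meas \<gamma> lam \<Delta> \<nu>))"
  proof (rule abs_integral_sub_le)
    show "\<bar>conv_inv f1 \<gamma> lam \<Delta> \<nu> x * conv_inv f2 \<gamma> lam \<Delta> \<nu> x\<bar> \<le> M1 * E\<^sup>2 * (M2 * E\<^sup>2)" for x
      unfolding E_def by (rule abs_mult_le[OF conv_inv_approx(2)[OF f1 b1] conv_inv_approx(2)[OF f2 b2]])
    show "\<bar>E\<^sup>2 * (conv_inv_trunc f1 \<gamma> \<Delta> \<nu> x * conv_inv_trunc f2 \<gamma> \<Delta> \<nu> x)\<bar> \<le> 9 * (2 * M1 * (2 * M2))"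
      for x
      using E abs_conv_inv_trunc_le[OF f1 b1 t1] abs_conv_inv_trunc_le[OF f2 b2 t1]
      by (intro abs_mult_le) auto
  qed (use abs_conv_inv_product_sub_le[OF f1 b1 f2 b2 t1] P.finite_measure_axioms
       in \<open>auto simp: E_def\<close>)
  then show ?thesis by (simp add: P.prob_space E_def)
qed

lemma integral_conv_inv_product_approx:
  assumes f1[measurable]: "f1 \<in> borel_measurable borel" and b1: "\<And>x. \<bar>f1 x\<bar> \<le> M1"
    and f2[measurable]: "f2 \<in> borel_measurable borel" and b2: "\<And>x. \<bar>f2 x\<bar> \<le> M2"
    and t1: "lam * \<Delta> \<le> 1"
  shows "\<bar>(\<integral>x. conv_inv f1 \<gamma> lam \<Delta> \<nu> x * conv_inv f2 \<gamma> lam \<Delta> \<nu> x \<partial>P_meas \<gamma> lam \<Delta> \<nu>)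
      - (f1 0 * f2 0 + \<Delta> * ((\<integral>x. f1 x * f2 x \<partial>\<nu>)
          - f1 0 * fun_conv f2 (nu_bar \<nu>) 0 - f2 0 * fun_conv f1 (nu_bar \<nu>) 0 + lam * f1 0 * f2 0))\<bar>
    \<le> 200 * M1 * M2 * (lam * \<Delta>)\<^sup>2"
proof -
  define t where "t = lam * \<Delta>"
  define E where "E = exp t"
  define K where "K = M1 * M2 * t\<^sup>2"
  define P where "P = P_meas \<gamma> lam \<Delta> \<nu>"
  define G where "G x = conv_inv f1 \<gamma> lam \<Delta> \<nu> x * conv_inv f2 \<gamma> lam \<Delta> \<nu> x" for x
  define L where "L x = conv_inv_trunc f1 \<gamma> \<Delta> \<nu> x * conv_inv_trunc f2 \<gamma> \<Delta> \<nu> x" for x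
  define F0 where "F0 = f1 0 * f2 0"
  define Y where "Y = \<Delta> * ((\<integral>x. f1 x * f2 x \<partial>\<nu>)
    - f1 0 * fun_conv f2 (nu_bar \<nu>) 0 - f2 0 * fun_conv f1 (nu_bar \<nu>) 0)"
  have t0: "0 \<le> t" using lam_mult_Delta_nonneg by (simp add: t_def)
  have M10: "0 \<le> M1" and M20: "0 \<le> M2" using b1[of 0] b2[of 0] by linarith+
  have E: "0 \<le> E" "E \<le> 3" "E\<^sup>2 \<le> 9" "E\<^sup>2 * exp (- t) = E"
    using exp_le_3_and_taylor_bounds(1)[OF t0 t1[folded t_def]] power_mono[of E 3 2]
    by (simp_all add: E_def exp_minus power2_eq_square)
  have [measurable]: "L \<in> borel_measurable borel"
    using borel_measurable_conv_inv_trunc[OF f1] borel_measurable_conv_inv_trunc[OF f2]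
    unfolding L_def[abs_def] by measurable
  have Lb: "\<bar>L x\<bar> \<le> 2 * M1 * (2 * M2)" for x
    unfolding L_def by (rule abs_mult_le[OF abs_conv_inv_trunc_le[OF f1 b1 t1] abs_conv_inv_trunc_le[OF f2 b2 t1]])
  have truncate_conv_inv: "\<bar>(\<integral>x. G x \<partial>P) - E\<^sup>2 * (\<integral>x. L x \<partial>P)\<bar> \<le> 135 * K"
    using integral_conv_inv_product_sub_le[OF f1 b1 f2 b2 t1]
    by (simp add: G_def L_def P_def E_def K_def t_def mult.assoc)
  have "\<bar>E\<^sup>2 * ((\<integral>x. L x \<partial>P) - exp (- t) * (L (\<gamma> * \<Delta>) + \<Delta> * (\<integral>y. L (\<gamma> * \<Delta> + y) \<partial>\<nu>)))\<bar> \<le> 9 * (4 * K)"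
    using E integral_P_meas_approx[of L "4 * M1 * M2"] Lb
    by (intro abs_mult_le) (auto simp: P_def K_def t_def mult_ac)
  then have truncate_P: "\<bar>E\<^sup>2 * (\<integral>x. L x \<partial>P) - E * (L (\<gamma> * \<Delta>) + \<Delta> * (\<integral>y. L (\<gamma> * \<Delta> + y) \<partial>\<nu>))\<bar> \<le> 36 * K"
    by (simp add: right_diff_distrib mult.assoc[symmetric] E(4))
  have "\<bar>E * (L (\<gamma> * \<Delta>) + \<Delta> * (\<integral>y. L (\<gamma> * \<Delta> + y) \<partial>\<nu>) - (F0 + Y))\<bar> \<le> 3 * (4 * K)"
    using E abs_conv_inv_trunc_expansion_sub_le[OF f1 b1 f2 b2 t1]
    by (intro abs_mult_le) (auto simp: L_def F0_def Y_def K_def t_def mult_ac)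
  then have expand_trunc: "\<bar>E * (L (\<gamma> * \<Delta>) + \<Delta> * (\<integral>y. L (\<gamma> * \<Delta> + y) \<partial>\<nu>)) - E * (F0 + Y)\<bar> \<le> 12 * K"
    by (simp add: right_diff_distrib)
  have "\<bar>E * (F0 + Y) - (F0 + t * F0 + Y)\<bar> \<le> (3 * (M1 * M2) + 4 * (3 * M1 * M2)) * t\<^sup>2"
    unfolding E_def using t0 t1 abs_mult_le[OF b1 b2] abs_first_order_term_le[OF f1 b1 f2 b2]
    by (intro abs_exp_mult_sub_first_order_le) (auto simp: F0_def Y_def t_def mult_ac)
  then have expand_exp: "\<bar>E * (F0 + Y) - (F0 + t * F0 + Y)\<bar> \<le> 15 * K"
    by (simp add: K_def algebra_simps)
  have K0: "0 \<le> K" using M10 M20 by (simp add: K_def)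
  have "\<bar>(\<integral>x. G x \<partial>P) - (F0 + t * F0 + Y)\<bar> \<le> 200 * K"
    using truncate_conv_inv truncate_P expand_trunc expand_exp K0 by (simp add: abs_le_iff)
  then show ?thesis
    by (simp add: G_def P_def F0_def Y_def K_def t_def algebra_simps)
qed

end

lemma integral_scale_measure:
  fixes g :: "'a \<Rightarrow> real"
  assumes r: "0 \<le> r" and g: "g \<in> borel_measurable M"
  shows "(\<integral>x. g x \<partial>scale_measure (ennreal r) M) = r * (\<integral>x. g x \<partial>M)"
proof -
  have "scale_measure (ennreal r) M = density M (\<lambda>_. ennreal r)"
    by (rule measure_eqI) (simp_all add: emeasure_density nn_integral_cmult_indicator)
  then show ?thesis using r g by (simp add: integral_density)
qed

theorem lemma2p2:
  fixes f1 f2 :: "real \<Rightarrow> real"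
  assumes f1_meas: "f1 \<in> borel_measurable borel" and f2_meas: "f2 \<in> borel_measurable borel"
    and f1_bdd: "bounded (range f1)" and f2_bdd: "bounded (range f2)"
  shows "(\<exists>C. \<forall>\<gamma> lam \<Delta> (\<nu>::real measure).
            finite_measure \<nu> \<and> sets \<nu> = sets borel \<and> measure \<nu> UNIV = lam
            \<and> lam > 0 \<and> \<Delta> > 0 \<and> lam * \<Delta> \<le> 1 \<longrightarrow>
            \<bar>(\<integral>x. conv_inv f1 \<gamma> lam \<Delta> \<nu> x * conv_inv f2 \<gamma> lam \<Delta> \<nu> x \<partial>P_meas \<gamma> lam \<Delta> \<nu>)
              - (f1 0 * f2 0 + \<Delta> * ((\<integral>x. f1 x * f2 x \<partial>\<nu>)
                   - f1 0 * fun_conv f2 (nu_bar \<nu>) 0 - f2 0 * fun_conv f1 (nu_bar \<nu>) 0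
                   + lam * f1 0 * f2 0))\<bar> \<le> C * (lam * \<Delta>)\<^sup>2)
    \<and> (f1 0 = 0 \<and> f2 0 = 0 \<longrightarrow>
         (\<exists>C. \<forall>\<gamma> lam \<Delta> (\<nu>::real measure).
            finite_measure \<nu> \<and> sets \<nu> = sets borel \<and> measure \<nu> UNIV = lam
            \<and> lam > 0 \<and> \<Delta> > 0 \<and> lam * \<Delta> \<le> 1 \<longrightarrow>
            \<bar>(\<integral>x. conv_inv f1 \<gamma> lam \<Delta> \<nu> x * conv_inv f2 \<gamma> lam \<Delta> \<nu> x \<partial>P_meas \<gamma> lam \<Delta> \<nu>)
              - lam * \<Delta> * (\<integral>x. f1 x * f2 x \<partial>(scale_measure (1 / lam) \<nu>))\<bar> \<le> C * (lam * \<Delta>)\<^sup>2))"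
proof -
  obtain M1 where b1: "\<And>x. \<bar>f1 x\<bar> \<le> M1" using f1_bdd unfolding bounded_iff by auto
  obtain M2 where b2: "\<And>x. \<bar>f2 x\<bar> \<le> M2" using f2_bdd unfolding bounded_iff by auto
  note approx = integral_conv_inv_product_approx[OF _ _ _ less_imp_le f1_meas b1 f2_meas b2]
  have scale: "lam * (\<integral>x. f1 x * f2 x \<partial>scale_measure (1 / lam) \<nu>) = (\<integral>x. f1 x * f2 x \<partial>\<nu>)"
    if "sets \<nu> = sets borel" "0 < lam" for lam :: real and \<nu> :: "real measure"
    using that f1_meas f2_meas integral_scale_measure[of "1 / lam" "\<lambda>x. f1 x * f2 x" \<nu>]
    by (simp add: divide_ennreal[symmetric] cong: measurable_cong_sets)
  show ?thesis
    apply (intro conjI impI exI[of _ "200 * M1 * M2"] allI; elim conjE)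
    subgoal for \<gamma> lam \<Delta> \<nu> using approx by simp
    subgoal for \<gamma> lam \<Delta> \<nu> using approx[of \<nu> lam \<Delta> \<gamma>] scale[of \<nu> lam]
      by (simp add: mult.commute[of lam \<Delta>] mult.assoc)
    done
qed

end
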